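(* Let $K$ be a field of characteristic zero, let $u,v,\ell\in K[X]$ be of degree one, and let $F=u\circ X^d\circ v$ where $d>1$. The following are equivalent: (1) the equation $F\circ\ell\circ F\circ b=a\circ F\circ F$ has infinitely many solutions in degree-one polynomials $a,b\in K[X]$; (2) $F=v^{-1}\circ\epsilon X^d\circ v$ and $\ell=v^{-1}\circ\delta X\circ v$ for some $\epsilon,\delta\in K^*$.
   Context: $\circ$ denotes composition of polynomials; $v^{-1}$ is the compositional inverse of $v$. *)

theory Defs
  imports "HOL-Computational_Algebra.Polynomial"
begin

definition comp_inv :: "'a::field poly \<Rightarrow> 'a poly" where
  "comp_inv v = [:- coeff v 0 / coeff v 1, 1 / coeff v 1:]"

end

theory Submission
  imports Defs
begin

text \<open>Conjugation \<open>p \<mapsto> v\<^sup>-\<^sup>1 \<circ> p \<circ> v\<close> is a degree-preserving automorphism of polynomial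
  composition, so it suffices to treat \<open>G = w \<circ> X\<^sup>d\<close> with \<open>w = c + gX\<close> and an arbitrary linear
  \<open>m\<close> in place of \<open>\<ell>\<close>. In \<open>G \<circ> m \<circ> G \<circ> b = a \<circ> G \<circ> G\<close> the right-hand side is a polynomial
  in \<open>X\<^sup>d\<close>, while on the left the coefficient of degree \<open>d\<^sup>2 - 1\<close> is a nonzero multiple of
  \<open>b(0)\<close>; hence \<open>b = \<beta>X\<close>. Then \<open>X\<^sup>d\<close> cancels on the right, leaving \<open>c + g L\<^sup>d = const + k w\<^sup>d\<close>
  with \<open>L\<close> linear, and the two top coefficients force \<open>L\<close> and \<open>w\<close> to have the same root, i.e.
  \<open>m(c) = m\<^sub>1 \<beta>\<^sup>d c\<close>. Unless \<open>c = m(0) = 0\<close> this leaves finitely many \<open>\<beta>\<close>, and \<open>a\<close> is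
  determined by \<open>b\<close>; if \<open>c = m(0) = 0\<close>, every \<open>b = \<beta>X\<close> extends to a solution.\<close>

lemma linear_poly_eq:
  fixes p :: "'a::zero poly"
  assumes "degree p = 1"
  shows "p = [:coeff p 0, coeff p 1:]"
proof (rule poly_eqI)
  fix n show "coeff p n = coeff [:coeff p 0, coeff p 1:] n"
    using assms by (cases n; cases "n - 1") (auto intro: coeff_eq_0)
qed

lemma degree_eq_1_iff:
  fixes p :: "'a::zero poly"
  shows "degree p = 1 \<longleftrightarrow> (\<exists>p0 p1. p1 \<noteq> 0 \<and> p = [:p0, p1:])"
  by (metis linear_poly_eq One_nat_def degree_pCons_eq_if pCons_0_0
      pCons_eq_0_iff zero_neq_one)

lemma pcompose_monom: "pcompose (monom c n) q = smult c (q ^ n)"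
  by (induction n) (simp_all add: monom_0 monom_Suc pcompose_pCons)

lemma pcompose_monom_monom:
  fixes a b :: "'a::comm_semiring_1"
  shows "pcompose (monom a n) (monom b k) = monom (a * b ^ n) (k * n)"
  by (simp add: pcompose_monom monom_power smult_monom)

lemma pcompose_idL:
  fixes p :: "'a::comm_semiring_1 poly"
  shows "pcompose [:0, 1:] p = p"
  by (simp add: pcompose_pCons)

lemma pcompose_right_cancel:
  fixes p q r :: "'a::idom poly"
  assumes "pcompose p r = pcompose q r" and "degree r > 0"
  shows "p = q"
  using pcompose_eq_0[of "p - q" r] assms by (simp add: pcompose_diff)

lemma coeff_pcompose_monom_not_dvd:
  fixes p :: "'a::comm_semiring_1 poly"
  assumes "\<not> d dvd k"
  shows "coeff (pcompose p (monom 1 d)) k = 0"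
  using assms
proof (induction p arbitrary: k)
  case (pCons a p)
  have "k \<noteq> 0" using pCons.prems by (metis dvd_0_right)
  moreover have "\<not> d dvd (k - d)" if "d \<le> k"
    using pCons.prems that by (simp add: dvd_minus_self)
  ultimately show ?case
    using pCons.IH by (simp add: pcompose_pCons coeff_monom_mult coeff_pCons split: nat.split)
qed simp

lemma
  fixes v :: "'a::field poly"
  assumes "degree v = 1"
  shows pcompose_comp_inv_right: "pcompose v (comp_inv v) = [:0, 1:]"
    and pcompose_comp_inv_left: "pcompose (comp_inv v) v = [:0, 1:]"
proof -
  obtain v0 v1 where v: "v = [:v0, v1:]" and "v1 \<noteq> 0"
    using assms degree_eq_1_iff by blast
  then show "pcompose v (comp_inv v) = [:0, 1:]" "pcompose (comp_inv v) v = [:0, 1:]"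
    by (simp_all add: comp_inv_def pcompose_pCons field_simps)
qed

lemma degree_comp_inv:
  fixes v :: "'a::field poly"
  assumes "degree v = 1"
  shows "degree (comp_inv v) = 1"
  using degree_pcompose[of v "comp_inv v"] pcompose_comp_inv_right[OF assms] assms by simp

definition pconj :: "'a::field poly \<Rightarrow> 'a poly \<Rightarrow> 'a poly" where
  "pconj v p = pcompose (comp_inv v) (pcompose p v)"

definition linear_solutions ::
    "'a::comm_semiring_0 poly \<Rightarrow> 'a poly \<Rightarrow> ('a poly \<times> 'a poly) set" where
  "linear_solutions F l = {(a, b). degree a = 1 \<and> degree b = 1 \<and>
     pcompose F (pcompose l (pcompose F b)) = pcompose a (pcompose F F)}"

context
  fixes v :: "'a::field poly"
  assumes deg_v: "degree v = 1"
begin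

lemma pcompose_comp_inv_cancel:
  "pcompose v (pcompose (comp_inv v) p) = p"
  "pcompose (comp_inv v) (pcompose v p) = p"
  by (simp_all add: pcompose_assoc pcompose_comp_inv_right pcompose_comp_inv_left deg_v
      pcompose_idL)

lemma pconj_pcompose: "pconj v (pcompose p q) = pcompose (pconj v p) (pconj v q)"
  by (simp add: pconj_def pcompose_assoc[symmetric] pcompose_comp_inv_cancel)

lemma pconj_inverse: "pcompose v (pcompose (pconj v p) (comp_inv v)) = p"
  by (simp add: pconj_def pcompose_assoc[symmetric] pcompose_comp_inv_cancel
      pcompose_comp_inv_right deg_v)

lemma pconj_surj: "pconj v (pcompose v (pcompose p (comp_inv v))) = p"
  by (simp add: pconj_def pcompose_assoc[symmetric] pcompose_comp_inv_cancel
      pcompose_comp_inv_left deg_v)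

lemma inj_pconj: "inj (pconj v)"
  by (metis injI pconj_inverse)

lemma degree_pconj: "degree (pconj v p) = degree p"
  by (simp add: pconj_def degree_pcompose deg_v degree_comp_inv)

lemma pconj_mem_linear_solutions:
  "(pconj v a, pconj v b) \<in> linear_solutions (pconj v F) (pconj v l) \<longleftrightarrow>
   (a, b) \<in> linear_solutions F l"
  by (simp add: linear_solutions_def degree_pconj pconj_pcompose[symmetric] inj_eq[OF inj_pconj])

lemma linear_solutions_pconj:
  "linear_solutions (pconj v F) (pconj v l) = map_prod (pconj v) (pconj v) ` linear_solutions F l"
proof (intro equalityI subsetI)
  fix x assume x: "x \<in> linear_solutions (pconj v F) (pconj v l)"
  obtain a b where "x = (pconj v a, pconj v b)"
    by (metis pconj_surj surj_pair)
  with x show "x \<in> map_prod (pconj v) (pconj v) ` linear_solutions F l"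
    using pconj_mem_linear_solutions by force
qed (use pconj_mem_linear_solutions in force)

lemma infinite_linear_solutions_pconj:
  "infinite (linear_solutions (pconj v F) (pconj v l)) \<longleftrightarrow> infinite (linear_solutions F l)"
  unfolding linear_solutions_pconj
  by (rule arg_cong[of _ _ Not], rule finite_image_iff)
    (meson inj_pconj prod.inj_map inj_on_subset subset_UNIV)

end

lemma coeff_pcompose_linear_power_subleading:
  fixes P :: "'a::comm_semiring_1 poly"
  assumes "degree P = n" and "n > 0" and "d > 1"
  shows "coeff (pcompose P ([:q, p:] ^ d)) (n * d - 1) =
         lead_coeff P * of_nat (n * d) * p ^ (n * d - 1) * q"
proof -
  have low: "coeff (([:q, p:] ^ d) ^ i) (n * d - 1) = 0" if "i < n" for i
  proof (rule coeff_eq_0)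
    have "degree (([:q, p:] ^ d) ^ i) \<le> d * i"
      by (rule order_trans[OF degree_power_le], rule mult_le_mono1,
          rule order_trans[OF degree_power_le]) (simp add: degree_pCons_le)
    also have "d * i < n * d - 1"
    proof -
      have "d * Suc i \<le> d * n"
        using that by (intro mult_le_mono2) simp
      then show ?thesis
        using assms(3) by (simp add: mult.commute)
    qed
    finally show "degree (([:q, p:] ^ d) ^ i) < n * d - 1" .
  qed
  have "coeff (pcompose P ([:q, p:] ^ d)) (n * d - 1) =
        (\<Sum>i\<le>n. coeff P i * coeff (([:q, p:] ^ d) ^ i) (n * d - 1))"
    by (subst (1) poly_as_sum_of_monoms[symmetric])
      (simp add: assms(1) pcompose_sum pcompose_monom coeff_sum)
  also have "\<dots> = lead_coeff P * coeff ([:q, p:] ^ (n * d)) (n * d - 1)"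
    using low
    by (simp add: lessThan_Suc_atMost[symmetric] assms(1) power_mult[symmetric] mult.commute)
  also have "\<dots> = lead_coeff P * of_nat (n * d) * p ^ (n * d - 1) * q"
    using assms binomial_symmetric[of 1 "n * d"] by (simp add: coeff_linear_poly_power mult.assoc)
  finally show ?thesis .
qed

lemma pcompose_monom_linear_eq_imp_shift_0:
  fixes P Q :: "'a::{idom,ring_char_0} poly"
  assumes eq: "pcompose P (pcompose (monom 1 d) [:q, p:]) = pcompose Q (monom 1 d)"
    and "degree P > 0" and "p \<noteq> 0" and "d > 1"
  shows "q = 0"
proof -
  let ?k = "degree P * d - 1"
  have "\<not> d dvd ?k"
  proof
    assume "d dvd ?k"
    then have "d dvd degree P * d - ?k"
      using dvd_diff_nat[of d "degree P * d" ?k] by simp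
    also have "degree P * d - ?k = 1"
      using assms(2,4) by (simp add: Suc_le_eq)
    finally show False
      using \<open>d > 1\<close> by simp
  qed
  then have "coeff (pcompose Q (monom 1 d)) ?k = 0"
    by (rule coeff_pcompose_monom_not_dvd)
  then have "lead_coeff P * of_nat (degree P * d) * p ^ ?k * q = 0"
    using eq coeff_pcompose_linear_power_subleading[of P "degree P" d q p] assms(2,4)
    by (simp add: pcompose_monom)
  then show "q = 0"
    using assms(2-4) by auto
qed

lemma affine_powers_eq_imp_same_root:
  fixes \<alpha> \<beta> \<gamma> \<eta> k k' s t :: "'a::{idom,ring_char_0}"
  assumes eq: "[:s:] + smult k ([:\<beta>, \<alpha>:] ^ d) = [:t:] + smult k' ([:\<eta>, \<gamma>:] ^ d)"
    and "k \<noteq> 0" and "\<alpha> \<noteq> 0" and "d > 1"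
  shows "\<beta> * \<gamma> = \<alpha> * \<eta>"
proof -
  obtain e where d: "d = Suc e" and "e > 0"
    using \<open>d > 1\<close> by (cases d) auto
  have coeffs: "coeff ([:x, y:] ^ d) d = y ^ d" "coeff ([:x, y:] ^ d) e = of_nat d * y ^ e * x"
    for x y :: 'a
    unfolding d by (simp_all add: coeff_linear_poly_power del: power_Suc)
  have const: "coeff [:x:] i = 0" if "i > 0" for x :: 'a and i
    using that by (cases i) simp_all
  have top: "k * \<alpha> ^ d = k' * \<gamma> ^ d"
    using arg_cong[OF eq, of "\<lambda>P. coeff P d"] \<open>d > 1\<close> by (simp add: coeffs const)
  have "k * (of_nat d * \<alpha> ^ e * \<beta>) = k' * (of_nat d * \<gamma> ^ e * \<eta>)"
    using arg_cong[OF eq, of "\<lambda>P. coeff P e"] \<open>e > 0\<close> by (simp add: coeffs const)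
  moreover have "of_nat d \<noteq> (0 :: 'a)"
    using \<open>d > 1\<close> by simp
  ultimately have next_to_top: "k * \<alpha> ^ e * \<beta> = k' * \<gamma> ^ e * \<eta>"
    by (simp add: ac_simps)
  have "k * \<alpha> ^ d * (\<beta> * \<gamma>) = \<alpha> * \<gamma> * (k * \<alpha> ^ e * \<beta>)"
    using d by (simp add: ac_simps)
  also have "\<dots> = \<alpha> * \<gamma> * (k' * \<gamma> ^ e * \<eta>)"
    by (simp only: next_to_top)
  also have "\<dots> = (k' * \<gamma> ^ d) * (\<alpha> * \<eta>)"
    using d by (simp add: ac_simps)
  also have "\<dots> = k * \<alpha> ^ d * (\<alpha> * \<eta>)"
    by (simp add: top)
  finally show ?thesis
    using assms(2,3) by simp
qed

lemma finite_power_eq: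
  fixes K :: "'a::idom"
  assumes "d > 0"
  shows "finite {x. x ^ d = K}"
proof -
  have "monom 1 d - [:K:] \<noteq> 0"
  proof
    assume "monom 1 d - [:K:] = 0"
    then have "degree (monom (1 :: 'a) d) = degree [:K:]"
      by simp
    then show False
      using assms by (simp add: degree_monom_eq)
  qed
  then have "finite {x. poly (monom 1 d - [:K:]) x = 0}"
    by (rule poly_roots_finite)
  then show ?thesis
    by (simp add: poly_monom)
qed

lemma linear_solution_constraint:
  fixes c g m0 m1 a0 a1 b0 b1 :: "'a::{idom,ring_char_0}"
  assumes G: "G = pcompose [:c, g:] (monom 1 d)"
    and eq: "pcompose G (pcompose [:m0, m1:] (pcompose G [:b0, b1:])) =
             pcompose [:a0, a1:] (pcompose G G)"
    and "g \<noteq> 0" and "m1 \<noteq> 0" and "b1 \<noteq> 0" and "d > 1"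
  shows "b0 = 0 \<and> m0 + m1 * c = m1 * b1 ^ d * c"
proof -
  let ?w = "[:c, g:]" and ?X = "monom 1 d :: 'a poly"
  have G_pcompose: "pcompose G L = [:c:] + smult g (L ^ d)" for L
    by (simp add: G pcompose_assoc[symmetric] pcompose_monom pcompose_pCons pcompose_add
        pcompose_smult)
  have "pcompose (pcompose G (pcompose [:m0, m1:] ?w)) (pcompose ?X [:b0, b1:]) =
        pcompose (pcompose [:a0, a1:] (pcompose G ?w)) ?X"
    using eq by (simp add: G pcompose_assoc)
  then have b0: "b0 = 0"
    by (rule pcompose_monom_linear_eq_imp_shift_0)
      (use assms in \<open>simp_all add: degree_pcompose degree_monom_eq\<close>)
  have X_commute: "pcompose ?X [:0, b1:] = pcompose [:0, b1 ^ d:] ?X"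
    using pcompose_monom_monom[of 1 d b1 1] pcompose_monom_monom[of "b1 ^ d" 1 1 d]
    by (simp add: monom_Suc monom_0)
  have "pcompose (pcompose G (pcompose [:m0, m1:] (pcompose ?w [:0, b1 ^ d:]))) ?X =
        pcompose (pcompose [:a0, a1:] (pcompose G ?w)) ?X"
    using eq b0 by (simp add: G pcompose_assoc[symmetric] X_commute)
  then have "pcompose G (pcompose [:m0, m1:] (pcompose ?w [:0, b1 ^ d:])) =
             pcompose [:a0, a1:] (pcompose G ?w)"
    by (rule pcompose_right_cancel) (use \<open>d > 1\<close> in \<open>simp add: degree_monom_eq\<close>)
  then have "[:c:] + smult g ([:m0 + m1 * c, m1 * g * b1 ^ d:] ^ d) =
             [:a0 + a1 * c:] + smult (a1 * g) ([:c, g:] ^ d)"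
    by (simp add: G_pcompose pcompose_pCons algebra_simps)
  then have "(m0 + m1 * c) * g = (m1 * g * b1 ^ d) * c"
    by (rule affine_powers_eq_imp_same_root) (use assms in simp_all)
  then have "g * (m0 + m1 * c) = g * (m1 * b1 ^ d * c)"
    by (simp add: ac_simps)
  then show ?thesis
    using b0 \<open>g \<noteq> 0\<close> by simp
qed

lemma finite_linear_solutions:
  fixes c g m0 m1 :: "'a::field_char_0"
  assumes "g \<noteq> 0" and "m1 \<noteq> 0" and "d > 1" and "c \<noteq> 0 \<or> m0 \<noteq> 0"
  shows "finite (linear_solutions (pcompose [:c, g:] (monom 1 d)) [:m0, m1:])"
    (is "finite ?S")
proof -
  let ?G = "pcompose [:c, g:] (monom 1 d)"
  define K where "K = (m0 + m1 * c) / (m1 * c)"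
  have "snd ` ?S \<subseteq> (\<lambda>p. [:0, p:]) ` {p. p ^ d = K}"
  proof
    fix b assume "b \<in> snd ` ?S"
    then obtain a where "(a, b) \<in> ?S"
      by force
    then obtain a0 a1 b0 b1 where "b = [:b0, b1:]" and "b1 \<noteq> 0"
      and "pcompose ?G (pcompose [:m0, m1:] (pcompose ?G [:b0, b1:])) =
           pcompose [:a0, a1:] (pcompose ?G ?G)"
      unfolding linear_solutions_def degree_eq_1_iff by blast
    from linear_solution_constraint[OF refl this(3) assms(1,2) this(2) assms(3)]
    have "b0 = 0" and root: "m0 + m1 * c = m1 * b1 ^ d * c"
      by blast+
    moreover have "c \<noteq> 0"
      using root assms(2,4) by auto
    ultimately show "b \<in> (\<lambda>p. [:0, p:]) ` {p. p ^ d = K}"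
      using \<open>b = [:b0, b1:]\<close> assms(2) by (auto simp: K_def)
  qed
  then have "finite (snd ` ?S)"
    by (rule finite_subset) (use finite_power_eq[of d K] \<open>d > 1\<close> in simp)
  moreover have "inj_on snd ?S"
  proof (rule inj_onI)
    fix x y assume "x \<in> ?S" "y \<in> ?S" "snd x = snd y"
    then have "pcompose (fst x) (pcompose ?G ?G) = pcompose (fst y) (pcompose ?G ?G)"
      unfolding linear_solutions_def by (auto split: prod.splits)
    then have "fst x = fst y"
      by (rule pcompose_right_cancel)
        (use assms in \<open>simp add: degree_pcompose degree_monom_eq\<close>)
    then show "x = y"
      using \<open>snd x = snd y\<close> by (simp add: prod_eq_iff)
  qed
  ultimately show ?thesis
    by (simp add: finite_image_iff)
qed

lemma infinite_linear_solutions_monom: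
  fixes g \<delta> :: "'a::field_char_0"
  assumes "\<delta> \<noteq> 0"
  shows "infinite (linear_solutions (monom g d) (monom \<delta> 1))"
proof -
  let ?sol = "\<lambda>p. (monom (\<delta> ^ d * p ^ (d * d)) 1, monom p 1)"
  have "?sol ` (UNIV - {0}) \<subseteq> linear_solutions (monom g d) (monom \<delta> 1)"
    using assms by (auto simp: linear_solutions_def pcompose_monom_monom degree_monom_eq
        power_mult power_mult_distrib ac_simps)
  moreover have "infinite (?sol ` (UNIV - {0}))"
    by (subst finite_image_iff) (auto intro: inj_onI simp: infinite_UNIV_char_0)
  ultimately show ?thesis
    using infinite_super by blast
qed

lemma infinite_linear_solutions_iff:
  fixes w m :: "'a::field_char_0 poly"
  assumes "degree w = 1" and "degree m = 1" and "d > 1"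
  shows "infinite (linear_solutions (pcompose w (monom 1 d)) m) \<longleftrightarrow>
    (\<exists>\<epsilon> \<delta>. \<epsilon> \<noteq> 0 \<and> \<delta> \<noteq> 0 \<and> pcompose w (monom 1 d) = monom \<epsilon> d \<and> m = monom \<delta> 1)"
    (is "_ \<longleftrightarrow> ?monomial")
proof -
  obtain c g where w: "w = [:c, g:]" and "g \<noteq> 0"
    using assms(1) degree_eq_1_iff by blast
  obtain m0 m1 where m: "m = [:m0, m1:]" and "m1 \<noteq> 0"
    using assms(2) degree_eq_1_iff by blast
  have G: "pcompose w (monom 1 d) = [:c:] + monom g d"
    by (simp add: w pcompose_pCons smult_monom)
  have "?monomial \<longleftrightarrow> c = 0 \<and> m0 = 0"
  proof
    assume ?monomial
    then obtain \<epsilon> \<delta> where "pcompose w (monom 1 d) = monom \<epsilon> d" and "m = monom \<delta> 1"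
      by blast
    then have "coeff (pcompose w (monom 1 d)) 0 = 0" and "coeff m 0 = 0"
      using \<open>d > 1\<close> by simp_all
    then show "c = 0 \<and> m0 = 0"
      using \<open>d > 1\<close> by (simp add: G m)
  next
    assume "c = 0 \<and> m0 = 0"
    then show ?monomial
      using \<open>g \<noteq> 0\<close> \<open>m1 \<noteq> 0\<close>
      by (intro exI[of _ g] exI[of _ m1]) (simp add: G m monom_Suc monom_0)
  qed
  moreover have "infinite (linear_solutions (pcompose w (monom 1 d)) m) \<longleftrightarrow> c = 0 \<and> m0 = 0"
  proof (cases "c = 0 \<and> m0 = 0")
    case True
    then show ?thesis
      using infinite_linear_solutions_monom[OF \<open>m1 \<noteq> 0\<close>, of g d]
      by (simp add: G m monom_Suc monom_0)
  next
    case False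
    then show ?thesis
      using finite_linear_solutions[OF \<open>g \<noteq> 0\<close> \<open>m1 \<noteq> 0\<close> \<open>d > 1\<close>]
      by (simp add: w m)
  qed
  ultimately show ?thesis
    by simp
qed

theorem lemma4p2:
  fixes u v l :: "'a::field_char_0 poly" and d :: nat
  assumes "degree u = 1" and "degree v = 1" and "degree l = 1" and "d > 1"
  defines "F \<equiv> pcompose u (pcompose (monom 1 d) v)"
  shows "infinite {(a, b). degree a = 1 \<and> degree b = 1 \<and>
            pcompose F (pcompose l (pcompose F b)) = pcompose a (pcompose F F)}
         \<longleftrightarrow>
         (\<exists>\<epsilon> \<delta>. \<epsilon> \<noteq> 0 \<and> \<delta> \<noteq> 0 \<and>
            F = pcompose (comp_inv v) (pcompose (monom \<epsilon> d) v) \<and>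
            l = pcompose (comp_inv v) (pcompose (monom \<delta> 1) v))"
proof -
  define w where "w = pcompose v u"
  define m where "m = pcompose v (pcompose l (comp_inv v))"
  have F: "F = pconj v (pcompose w (monom 1 d))"
    by (simp add: F_def w_def pconj_def pcompose_assoc[symmetric] pcompose_comp_inv_cancel assms(2))
  have l: "l = pconj v m"
    by (simp add: m_def pconj_surj assms(2))
  have "infinite (linear_solutions F l) \<longleftrightarrow> infinite (linear_solutions (pcompose w (monom 1 d)) m)"
    by (simp add: F l infinite_linear_solutions_pconj assms(2))
  also have "\<dots> \<longleftrightarrow> (\<exists>\<epsilon> \<delta>. \<epsilon> \<noteq> 0 \<and> \<delta> \<noteq> 0 \<and> pcompose w (monom 1 d) = monom \<epsilon> d \<and> m = monom \<delta> 1)"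
    by (rule infinite_linear_solutions_iff)
      (use assms in \<open>simp_all add: w_def m_def degree_pcompose degree_comp_inv\<close>)
  also have "\<dots> \<longleftrightarrow> (\<exists>\<epsilon> \<delta>. \<epsilon> \<noteq> 0 \<and> \<delta> \<noteq> 0 \<and> F = pconj v (monom \<epsilon> d) \<and> l = pconj v (monom \<delta> 1))"
    by (simp add: F l inj_eq[OF inj_pconj[OF assms(2)]])
  finally show ?thesis
    by (simp add: linear_solutions_def pconj_def)
qed

end
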